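(* Let $G$ be a (possibly infinite) graph and $k$ a positive integer such that $G$ contains no path on $k$ vertices as a subgraph and every vertex of $G$ lies on fewer than $k$ pairwise edge-disjoint cycles. Then, whatever the cat's starting vertex and play, the herder can capture the cat after at most $k^3-2k^2+3k-2$ edge deletions; i.e. $\mathrm{cat}(G)\le k^3-2k^2+3k-2$.
   Context: Cat Herding is played on a simple, possibly infinite graph $G$. The cat first places its token on a vertex. Then the players alternate, the herder moving first: the herder deletes one edge of the current graph, and then, unless the cat's current vertex has degree $0$ in the current graph, the cat moves its token along a finite path with at least one edge in the current graph to a different vertex. The cat is captured when its vertex has degree $0$ in the current graph; the score is the number of edges deleted. $\mathrm{cat}(G)$ denotes the optimal score (herder minimizing, cat maximizing, cat choosing the start). *)

theory Defs
  imports Main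
begin

definition simple_graph :: "'a set \<Rightarrow> 'a set set \<Rightarrow> bool" where
  "simple_graph V E \<longleftrightarrow> (\<forall>e\<in>E. \<exists>x y. x \<noteq> y \<and> x \<in> V \<and> y \<in> V \<and> e = {x, y})"

definition isolated :: "'a set set \<Rightarrow> 'a \<Rightarrow> bool" where
  "isolated E v \<longleftrightarrow> (\<forall>e\<in>E. v \<notin> e)"

definition reach :: "'a set set \<Rightarrow> 'a \<Rightarrow> 'a \<Rightarrow> bool" where
  "reach E v w \<longleftrightarrow> (v, w) \<in> {(x, y). {x, y} \<in> E}\<^sup>*"

text \<open>herder_wins n E v: it is the herder's turn, the current edge set is E, the cat
  sits at v; the herder can force capture using at most n further edge deletions.\<close>
fun herder_wins :: "nat \<Rightarrow> 'a set set \<Rightarrow> 'a \<Rightarrow> bool" where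
  "herder_wins 0 E v \<longleftrightarrow> isolated E v"
| "herder_wins (Suc n) E v \<longleftrightarrow> isolated E v \<or>
     (\<exists>e\<in>E. \<forall>w. w \<noteq> v \<and> reach (E - {e}) v w \<longrightarrow> herder_wins n (E - {e}) w)"

definition has_path :: "'a set set \<Rightarrow> nat \<Rightarrow> bool" where
  "has_path E k \<longleftrightarrow> (\<exists>vs. length vs = k \<and> distinct vs \<and>
      (\<forall>i. Suc i < k \<longrightarrow> {vs ! i, vs ! Suc i} \<in> E))"

definition is_cycle :: "'a set set \<Rightarrow> 'a list \<Rightarrow> bool" where
  "is_cycle E vs \<longleftrightarrow> distinct vs \<and> 3 \<le> length vs \<and>
      (\<forall>i < length vs. {vs ! i, vs ! ((Suc i) mod length vs)} \<in> E)"

definition cycle_edges :: "'a list \<Rightarrow> 'a set set" where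
  "cycle_edges vs = {{vs ! i, vs ! ((Suc i) mod length vs)} | i. i < length vs}"

definition on_disjoint_cycles :: "'a set set \<Rightarrow> 'a \<Rightarrow> nat \<Rightarrow> bool" where
  "on_disjoint_cycles E v k \<longleftrightarrow> (\<exists>cs :: nat \<Rightarrow> 'a list.
      (\<forall>i<k. is_cycle E (cs i) \<and> v \<in> set (cs i)) \<and>
      (\<forall>i<k. \<forall>j<k. i \<noteq> j \<longrightarrow> cycle_edges (cs i) \<inter> cycle_edges (cs j) = {}))"

end

theory Submission
  imports Defs
begin

text \<open>Induct on the height h of a vertex r that the cat can reach, i.e. the maximal number of
  vertices of a path starting at r; initially h \<le> k - 1 because there is no path on k vertices.
  The edges of a maximal family of edge-disjoint cycles through r form a set F of at most
  (k - 1) h edges meeting every cycle through r. The herder deletes edges of F while the cat can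
  still reach r. If the cat is cut off from r, its component contains a vertex of smaller height:
  the first vertex of the component on a path from r. Otherwise r lies on no cycle, and deleting
  the first edge r c of a path from r to the cat (after one arbitrary deletion if the cat sits at r)
  traps the cat in the component of c, whose height is smaller because paths from c cannot return
  to r. Each level thus costs at most (k - 1)^2 + 2 deletions, and
  (k - 1)((k - 1)^2 + 2) \<le> k^3 - 2k^2 + 3k - 2.\<close>

abbreviation walk :: "'a set set \<Rightarrow> 'a list \<Rightarrow> bool" where
  "walk E \<equiv> successively (\<lambda>x y. {x, y} \<in> E)"

lemma walk_mono: "walk E xs \<Longrightarrow> E \<subseteq> E' \<Longrightarrow> walk E' xs"
  by (erule successively_mono) auto

lemma walk_avoiding_vertex: "walk E xs \<Longrightarrow> r \<notin> set xs \<Longrightarrow> walk (E - {{r, c}}) xs"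
  by (erule successively_mono) (auto simp: doubleton_eq_iff)

lemma reach_refl: "reach E v v"
  by (simp add: reach_def)

lemma reach_trans: "reach E a b \<Longrightarrow> reach E b c \<Longrightarrow> reach E a c"
  unfolding reach_def by (rule rtrancl_trans)

lemma reach_mono: "reach E a b \<Longrightarrow> E \<subseteq> E' \<Longrightarrow> reach E' a b"
  unfolding reach_def by (erule rtrancl_mono[THEN subsetD, rotated]) auto

lemma reach_sym: "reach E a b \<Longrightarrow> reach E b a"
proof -
  have "{(x, y). {x, y} \<in> E}\<inverse> = {(x, y). {x, y} \<in> E}"
    by (auto simp: insert_commute)
  then show "reach E a b \<Longrightarrow> reach E b a"
    unfolding reach_def by (metis rtrancl_converseI)
qed

lemma reach_edge: "{a, b} \<in> E \<Longrightarrow> reach E a b"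
  by (simp add: reach_def r_into_rtrancl)

lemma walk_reach: "walk E (x # xs) \<Longrightarrow> y \<in> set (x # xs) \<Longrightarrow> reach E x y"
proof (induction xs arbitrary: x)
  case Nil
  then show ?case by (simp add: reach_refl)
next
  case (Cons z xs)
  then have "reach E x z" "walk E (z # xs)"
    by (simp_all add: reach_edge)
  with Cons show ?case
    by (auto intro: reach_refl reach_trans)
qed

lemma reach_imp_path:
  assumes "reach E a b"
  obtains ps where "walk E (a # ps)" "distinct (a # ps)" "last (a # ps) = b"
proof -
  have "\<exists>ps. walk E (a # ps) \<and> distinct (a # ps) \<and> last (a # ps) = b"
    using assms unfolding reach_def
  proof (induction rule: converse_rtrancl_induct)
    case base
    show ?case by (intro exI[of _ "[]"]) simp
  next
    case (step x y)
    from step.IH obtain ps where ps: "walk E (y # ps)" "distinct (y # ps)" "last (y # ps) = b"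
      by (elim exE conjE)
    show ?case
    proof (cases "x \<in> set (y # ps)")
      case True
      then obtain us vs where uv: "y # ps = us @ x # vs"
        by (meson split_list)
      have "walk E (x # vs)" "distinct (x # vs)" "last (x # vs) = b"
        using ps unfolding uv by (simp_all add: successively_append_iff)
      then show ?thesis by blast
    next
      case False
      have "walk E (x # y # ps)" "distinct (x # y # ps)" "last (x # y # ps) = b"
        using ps step.hyps(1) False by simp_all
      then show ?thesis by blast
    qed
  qed
  with that show ?thesis by (elim exE conjE)
qed

definition paths_from_le :: "'a set set \<Rightarrow> 'a \<Rightarrow> nat \<Rightarrow> bool" where
  "paths_from_le E r h \<longleftrightarrow>
     (\<forall>xs. walk E (r # xs) \<and> distinct (r # xs) \<longrightarrow> length (r # xs) \<le> h)"

lemma paths_from_le_mono: "paths_from_le E r h \<Longrightarrow> E' \<subseteq> E \<Longrightarrow> paths_from_le E' r h"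
  unfolding paths_from_le_def using walk_mono by blast

lemma not_paths_from_le_0: "\<not> paths_from_le E r 0"
  unfolding paths_from_le_def by (auto intro: exI[of _ "[]"])

lemma paths_from_le_if_not_has_path: "\<not> has_path E k \<Longrightarrow> paths_from_le E v (k - 1)"
  unfolding paths_from_le_def
proof (intro allI impI)
  fix xs assume "\<not> has_path E k" and p: "walk E (v # xs) \<and> distinct (v # xs)"
  show "length (v # xs) \<le> k - 1"
  proof (rule ccontr)
    assume "\<not> length (v # xs) \<le> k - 1"
    then have "length (take k (v # xs)) = k" by simp
    moreover have "distinct (take k (v # xs))"
      using p by simp
    moreover have "{take k (v # xs) ! i, take k (v # xs) ! Suc i} \<in> E" if "Suc i < k" for i
    proof -
      have "Suc i < length (v # xs)"
        using that \<open>length (take k (v # xs)) = k\<close> by simp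
      then have "{(v # xs) ! i, (v # xs) ! Suc i} \<in> E"
        using p successively_nth by blast
      then show ?thesis using that by simp
    qed
    ultimately have "has_path E k"
      unfolding has_path_def by blast
    with \<open>\<not> has_path E k\<close> show False by blast
  qed
qed

lemma is_cycle_iff_walk:
  "is_cycle E vs \<longleftrightarrow> distinct vs \<and> 3 \<le> length vs \<and> walk E vs \<and> {last vs, hd vs} \<in> E"
proof -
  have closing: "{vs ! i, vs ! (Suc i mod length vs)} = {last vs, hd vs}"
    if "i < length vs" "\<not> Suc i < length vs" for i
  proof -
    have "Suc i = length vs" using that by simp
    then have "i = length vs - 1" "Suc i mod length vs = 0" by simp_all
    moreover have "vs \<noteq> []" using that by auto
    ultimately show ?thesis by (simp add: last_conv_nth hd_conv_nth)
  qed
  have "(\<forall>i < length vs. {vs ! i, vs ! (Suc i mod length vs)} \<in> E) \<longleftrightarrow>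
      walk E vs \<and> (vs \<noteq> [] \<longrightarrow> {last vs, hd vs} \<in> E)"
  proof
    assume edges: "\<forall>i < length vs. {vs ! i, vs ! (Suc i mod length vs)} \<in> E"
    have "walk E vs"
      unfolding successively_conv_nth using edges by (metis Suc_lessD mod_less)
    moreover have "{last vs, hd vs} \<in> E" if "vs \<noteq> []"
      using edges[rule_format, of "length vs - 1"] closing[of "length vs - 1"] that by simp
    ultimately show "walk E vs \<and> (vs \<noteq> [] \<longrightarrow> {last vs, hd vs} \<in> E)" by blast
  next
    assume "walk E vs \<and> (vs \<noteq> [] \<longrightarrow> {last vs, hd vs} \<in> E)"
    then show "\<forall>i < length vs. {vs ! i, vs ! (Suc i mod length vs)} \<in> E"
      using closing successively_nth by fastforce
  qed
  then show ?thesis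
    unfolding is_cycle_def by auto
qed

definition on_cycle :: "'a set set \<Rightarrow> 'a \<Rightarrow> bool" where
  "on_cycle E r \<longleftrightarrow> (\<exists>cy. is_cycle E cy \<and> r \<in> set cy)"

lemma is_cycle_mono: "is_cycle E cy \<Longrightarrow> E \<subseteq> E' \<Longrightarrow> is_cycle E' cy"
  unfolding is_cycle_def by auto

lemma on_cycle_mono: "on_cycle E r \<Longrightarrow> E \<subseteq> E' \<Longrightarrow> on_cycle E' r"
  unfolding on_cycle_def using is_cycle_mono by blast

lemma cycle_length_le:
  assumes "is_cycle E cy" "r \<in> set cy" "paths_from_le E r h"
  shows "length cy \<le> h"
proof -
  obtain us vs where cy: "cy = us @ r # vs"
    using assms(2) by (meson split_list)
  have "walk E cy" "distinct cy" "{last cy, hd cy} \<in> E"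
    using assms(1) unfolding is_cycle_iff_walk by simp_all
  moreover have "last cy = last (r # vs)" "hd cy = hd (us @ [r])"
    unfolding cy by (simp, cases us, simp_all)
  ultimately have "walk E ((r # vs) @ us)"
    unfolding cy by (cases "us = []") (auto simp: successively_append_iff simp del: append_Cons)
  moreover have "distinct (r # vs @ us)"
    using \<open>distinct cy\<close> unfolding cy by auto
  ultimately show ?thesis
    using assms(3) unfolding paths_from_le_def cy by fastforce
qed

text \<open>No path from c can return to r without closing a cycle through r, so every path from c
  extends to a path from r.\<close>
lemma paths_from_le_delete_root_edge:
  assumes "\<not> on_cycle E r" "paths_from_le E r (Suc h)" "{r, c} \<in> E" "c \<noteq> r"
  shows "paths_from_le (E - {{r, c}}) c h"
  unfolding paths_from_le_def
proof (intro allI impI)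
  fix \<pi> assume p: "walk (E - {{r, c}}) (c # \<pi>) \<and> distinct (c # \<pi>)"
  have "r \<notin> set \<pi>"
  proof
    assume "r \<in> set \<pi>"
    then obtain us vs where \<pi>: "\<pi> = us @ r # vs"
      by (meson split_list)
    have "us \<noteq> []"
      using p unfolding \<pi> by (auto simp: insert_commute)
    moreover have "walk (E - {{r, c}}) ((c # us @ [r]) @ vs)"
      using p unfolding \<pi> by simp
    then have "walk (E - {{r, c}}) (c # us @ [r])"
      by (simp only: successively_append_iff)
    then have "walk E (c # us @ [r])"
      by (rule walk_mono) blast
    ultimately have "is_cycle E (c # us @ [r])"
      using p assms(3) unfolding is_cycle_iff_walk \<pi> by (cases us) (auto simp: insert_commute)
    then show False
      using assms(1) unfolding on_cycle_def by auto
  qed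
  moreover have "walk E (r # c # \<pi>)"
    using p assms(3) walk_mono[of "E - {{r, c}}" "c # \<pi>" E] by auto
  ultimately have "length (r # c # \<pi>) \<le> Suc h"
    using p assms(2,4) unfolding paths_from_le_def by (metis distinct.simps(2) set_ConsD)
  then show "length (c # \<pi>) \<le> h" by simp
qed

lemma on_disjoint_cycles_mono:
  "on_disjoint_cycles E r k \<Longrightarrow> E \<subseteq> E' \<Longrightarrow> on_disjoint_cycles E' r k"
  unfolding on_disjoint_cycles_def using is_cycle_mono by blast

lemma cycle_edges_subset: "is_cycle E cy \<Longrightarrow> cycle_edges cy \<subseteq> E"
  unfolding is_cycle_def cycle_edges_def by auto

lemma cycle_edges_eq_image:
  "cycle_edges cy = (\<lambda>i. {cy ! i, cy ! (Suc i mod length cy)}) ` {..<length cy}"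
  unfolding cycle_edges_def by auto

lemma finite_cycle_edges: "finite (cycle_edges cy)"
  unfolding cycle_edges_eq_image by simp

lemma card_cycle_edges_le: "card (cycle_edges cy) \<le> length cy"
  unfolding cycle_edges_eq_image using card_image_le[of "{..<length cy}"] by simp

lemma on_disjoint_cycles_Suc:
  assumes "\<forall>i<m. is_cycle E (cs i) \<and> r \<in> set (cs i)"
    and "\<forall>i<m. \<forall>j<m. i \<noteq> j \<longrightarrow> cycle_edges (cs i) \<inter> cycle_edges (cs j) = {}"
    and "is_cycle E cy" "r \<in> set cy" "cycle_edges cy \<inter> (\<Union>i<m. cycle_edges (cs i)) = {}"
  shows "on_disjoint_cycles E r (Suc m)"
proof -
  let ?cs = "cs(m := cy)"
  have "is_cycle E (?cs i) \<and> r \<in> set (?cs i)" if "i < Suc m" for i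
    using assms(1,3,4) that by (cases "i = m") auto
  moreover have "cycle_edges (?cs i) \<inter> cycle_edges (?cs j) = {}"
    if "i < Suc m" "j < Suc m" "i \<noteq> j" for i j
  proof (cases "i = m \<or> j = m")
    case True
    then show ?thesis using assms(5) that unfolding less_Suc_eq by auto
  next
    case False
    then show ?thesis using assms(2) that by simp
  qed
  ultimately show ?thesis
    unfolding on_disjoint_cycles_def by blast
qed

lemma cycle_transversal:
  assumes "\<not> on_disjoint_cycles E r k" "paths_from_le E r h"
  obtains F where "finite F" "card F \<le> (k - 1) * h"
    "\<And>E'. E' \<subseteq> E \<Longrightarrow> E' \<inter> F = {} \<Longrightarrow> \<not> on_cycle E' r"
proof -
  define n where "n = (LEAST n. \<not> on_disjoint_cycles E r n)"
  have not_n: "\<not> on_disjoint_cycles E r n"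
    unfolding n_def using assms(1) by (rule LeastI)
  have "n \<le> k"
    unfolding n_def using assms(1) by (rule Least_le)
  moreover have "on_disjoint_cycles E r 0"
    unfolding on_disjoint_cycles_def by simp
  ultimately obtain m where m: "n = Suc m" "m < k"
    using not_n by (cases n) auto
  then have "on_disjoint_cycles E r m"
    using not_less_Least[of m "\<lambda>n. \<not> on_disjoint_cycles E r n"] unfolding n_def by simp
  then obtain cs where cs: "\<forall>i<m. is_cycle E (cs i) \<and> r \<in> set (cs i)"
    "\<forall>i<m. \<forall>j<m. i \<noteq> j \<longrightarrow> cycle_edges (cs i) \<inter> cycle_edges (cs j) = {}"
    unfolding on_disjoint_cycles_def by blast
  define F where "F = (\<Union>i<m. cycle_edges (cs i))"
  have finite: "finite F"
    unfolding F_def by (simp add: finite_cycle_edges)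
  have "card F \<le> (\<Sum>i<m. card (cycle_edges (cs i)))"
    unfolding F_def by (rule card_UN_le) simp
  also have "\<dots> \<le> (\<Sum>i<m. h)"
  proof (rule sum_mono)
    fix i assume "i \<in> {..<m}"
    then have "length (cs i) \<le> h"
      using cs(1) cycle_length_le[OF _ _ assms(2)] by blast
    then show "card (cycle_edges (cs i)) \<le> h"
      using card_cycle_edges_le[of "cs i"] by linarith
  qed
  also have "\<dots> = m * h"
    by simp
  also have "\<dots> \<le> (k - 1) * h"
    using m by (intro mult_le_mono1) simp
  finally have card: "card F \<le> (k - 1) * h" .
  have acyclic: "\<not> on_cycle E' r" if "E' \<subseteq> E" "E' \<inter> F = {}" for E'
  proof
    assume "on_cycle E' r"
    then obtain cy where cy: "is_cycle E' cy" "r \<in> set cy"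
      unfolding on_cycle_def by blast
    have "cycle_edges cy \<inter> F = {}"
      using cycle_edges_subset[OF cy(1)] that(2) by blast
    then have "on_disjoint_cycles E r (Suc m)"
      using is_cycle_mono[OF cy(1) that(1)] cy(2) unfolding F_def
      by (intro on_disjoint_cycles_Suc[OF cs])
    with not_n m show False by simp
  qed
  show ?thesis
    using finite card acyclic by (rule that)
qed

lemma herder_wins_isolated: "isolated E v \<Longrightarrow> herder_wins n E v"
  by (cases n) simp_all

lemma herder_wins_SucI:
  assumes "e \<in> E" "\<And>w. w \<noteq> v \<Longrightarrow> reach (E - {e}) v w \<Longrightarrow> herder_wins n (E - {e}) w"
  shows "herder_wins (Suc n) E v"
  using assms by auto

lemma herder_wins_Suc: "herder_wins n E v \<Longrightarrow> herder_wins (Suc n) E v"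
proof (induction n arbitrary: E v)
  case 0
  then show ?case by simp
next
  case (Suc n)
  show ?case
  proof (cases "isolated E v")
    case False
    then obtain e where "e \<in> E" "\<And>w. w \<noteq> v \<Longrightarrow> reach (E - {e}) v w \<Longrightarrow> herder_wins n (E - {e}) w"
      using Suc.prems by auto
    then show ?thesis
      by (blast intro: herder_wins_SucI Suc.IH)
  qed simp
qed

lemma herder_wins_mono:
  assumes "herder_wins n E v" "n \<le> m"
  shows "herder_wins m E v"
  using assms(2,1) by (induction rule: dec_induct) (auto simp del: herder_wins.simps intro: herder_wins_Suc)

definition wins_at_height :: "'a set set \<Rightarrow> nat \<Rightarrow> nat \<Rightarrow> bool" where
  "wins_at_height E h N \<longleftrightarrow>
     (\<forall>E' w \<rho>. E' \<subseteq> E \<longrightarrow> reach E' w \<rho> \<longrightarrow> paths_from_le E' \<rho> h \<longrightarrow> herder_wins N E' w)"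

lemma wins_at_heightD:
  "wins_at_height E h N \<Longrightarrow> reach E w \<rho> \<Longrightarrow> paths_from_le E \<rho> h \<Longrightarrow> herder_wins N E w"
  unfolding wins_at_height_def by blast

lemma wins_at_height_mono:
  "wins_at_height E h N \<Longrightarrow> E' \<subseteq> E \<Longrightarrow> N \<le> M \<Longrightarrow> wins_at_height E' h M"
  unfolding wins_at_height_def by (meson herder_wins_mono order_trans)

lemma wins_at_height_0: "wins_at_height E 0 N"
  unfolding wins_at_height_def by (simp add: not_paths_from_le_0)

lemma wins_cutting_root_edge:
  assumes "\<not> on_cycle E r" "paths_from_le E r (Suc h)" "wins_at_height E h N"
    and "reach E r y" "y \<noteq> r"
  shows "herder_wins (Suc N) E y"
proof -
  obtain ps where ps: "walk E (r # ps)" "distinct (r # ps)" "last (r # ps) = y"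
    using assms(4) by (rule reach_imp_path)
  then obtain c qs where c: "ps = c # qs"
    using assms(5) by (cases ps) auto
  have edge: "{r, c} \<in> E" "c \<noteq> r" and r: "r \<notin> set (c # qs)"
    using ps unfolding c by auto
  have "walk (E - {{r, c}}) (c # qs)"
    using ps r unfolding c by (intro walk_avoiding_vertex) simp_all
  moreover have "y \<in> set (c # qs)"
    using ps(3) unfolding c by (metis last.simps last_in_set list.discI)
  ultimately have c_y: "reach (E - {{r, c}}) c y"
    by (rule walk_reach)
  have c_height: "paths_from_le (E - {{r, c}}) c h"
    using assms(1,2) edge by (rule paths_from_le_delete_root_edge)
  show ?thesis
  proof (rule herder_wins_SucI)
    show "{r, c} \<in> E" by (fact edge)
  next
    fix w assume "reach (E - {{r, c}}) y w"
    then have "reach (E - {{r, c}}) w c"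
      using c_y by (blast intro: reach_sym reach_trans)
    with c_height assms(3) show "herder_wins N (E - {{r, c}}) w"
      unfolding wins_at_height_def by blast
  qed
qed

lemma wins_at_acyclic_root:
  assumes "\<not> on_cycle E r" "paths_from_le E r (Suc h)" "wins_at_height E h N"
    and "reach E v r"
  shows "herder_wins (Suc (Suc N)) E v"
proof (cases "v = r")
  case False
  with assms have "herder_wins (Suc N) E v"
    by (intro wins_cutting_root_edge) (auto intro: reach_sym)
  then show ?thesis
    by (rule herder_wins_Suc)
next
  case True
  show ?thesis
  proof (cases "E = {}")
    case True
    then show ?thesis by (simp add: herder_wins_isolated isolated_def)
  next
    case False
    then obtain e where e: "e \<in> E" by blast
    have "\<not> on_cycle (E - {e}) r"
      using assms(1) on_cycle_mono[of "E - {e}" r E] by blast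
    moreover have "paths_from_le (E - {e}) r (Suc h)"
      using assms(2) by (rule paths_from_le_mono) (rule Diff_subset)
    moreover have "wins_at_height (E - {e}) h N"
      using assms(3) by (rule wins_at_height_mono) (rule Diff_subset, rule order_refl)
    ultimately show ?thesis
      using \<open>v = r\<close> by (intro herder_wins_SucI[OF e] wins_cutting_root_edge) auto
  qed
qed

text \<open>If the cat's component no longer contains r, take a path from r to the cat in the larger
  graph E0 and let z be its first vertex in that component: prefixing this path extends every
  path from z, so paths from z are shorter than those from r.\<close>
lemma cut_component_lower_vertex:
  assumes "E \<subseteq> E0" "reach E0 r v" "\<not> reach E v r" "paths_from_le E0 r (Suc h)"
  obtains z where "reach E v z" "paths_from_le E z h"
proof -
  define D where "D = {x. reach E v x}"
  obtain ps where ps: "walk E0 (r # ps)" "distinct (r # ps)" "last (r # ps) = v"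
    using assms(2) by (rule reach_imp_path)
  have "\<exists>x\<in>set (r # ps). x \<in> D"
    using ps(3) last_in_set[of "r # ps"] unfolding D_def by (auto intro: reach_refl)
  then obtain ys z zs where split: "r # ps = ys @ z # zs" "z \<in> D" "\<forall>y\<in>set ys. y \<notin> D"
    by (rule split_list_first_propE)
  have "ys \<noteq> []"
    using split assms(3) unfolding D_def by (cases ys) auto
  have "reach E v z"
    using split(2) unfolding D_def by simp
  moreover have "paths_from_le E z h"
    unfolding paths_from_le_def
  proof (intro allI impI)
    fix \<pi> assume \<pi>: "walk E (z # \<pi>) \<and> distinct (z # \<pi>)"
    have "set (z # \<pi>) \<subseteq> D"
    proof
      fix x assume "x \<in> set (z # \<pi>)"
      with \<pi> have "reach E z x" by (blast intro: walk_reach)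
      with split(2) show "x \<in> D" unfolding D_def by (blast intro: reach_trans)
    qed
    then have "distinct (ys @ z # \<pi>)"
      using \<pi> split ps(2) by (auto simp: distinct_append)
    moreover have "walk E0 (ys @ z # \<pi>)"
      using ps(1) \<pi> walk_mono[OF _ assms(1)] \<open>ys \<noteq> []\<close>
      unfolding split(1) by (auto simp: successively_append_iff)
    moreover have "ys @ z # \<pi> = r # tl ys @ z # \<pi>"
      using split(1) \<open>ys \<noteq> []\<close> by (cases ys) auto
    ultimately have "length (ys @ z # \<pi>) \<le> Suc h"
      using assms(4) unfolding paths_from_le_def by metis
    then show "length (z # \<pi>) \<le> h"
      using \<open>ys \<noteq> []\<close> by (cases ys) simp_all
  qed
  ultimately show ?thesis
    by (rule that)
qed

lemma wins_if_root_cut_off_or_acyclic: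
  assumes "paths_from_le E0 r (Suc h)" "wins_at_height E0 h N"
    and "E \<subseteq> E0" "reach E0 r v" "\<not> reach E v r \<or> \<not> on_cycle E r"
  shows "herder_wins (Suc (Suc N)) E v"
proof (cases "reach E v r")
  case False
  then obtain z where "reach E v z" "paths_from_le E z h"
    using assms(3,4,1) by (elim cut_component_lower_vertex)
  then have "herder_wins N E v"
    using wins_at_heightD[OF wins_at_height_mono[OF assms(2,3) order_refl]] by blast
  then show ?thesis
    by (rule herder_wins_mono) simp
next
  case True
  moreover have "paths_from_le E r (Suc h)"
    using assms(1,3) by (rule paths_from_le_mono)
  moreover have "wins_at_height E h N"
    using assms(2,3) by (rule wins_at_height_mono) simp
  ultimately show ?thesis
    using assms(5) by (intro wins_at_acyclic_root) simp_all
qed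

lemma wins_deleting_transversal:
  assumes "finite F" "\<And>E'. E' \<subseteq> E0 \<Longrightarrow> E' \<inter> F = {} \<Longrightarrow> \<not> on_cycle E' r"
    and "paths_from_le E0 r (Suc h)" "wins_at_height E0 h N"
    and "E \<subseteq> E0" "reach E0 r v"
  shows "herder_wins (card (F \<inter> E) + Suc (Suc N)) E v"
  using assms(5,6)
proof (induction "card (F \<inter> E)" arbitrary: E v)
  case 0
  then have "E \<inter> F = {}"
    using assms(1) by auto
  then have "\<not> on_cycle E r"
    using assms(2) 0 by blast
  then have "herder_wins (Suc (Suc N)) E v"
    using 0 by (intro wins_if_root_cut_off_or_acyclic[OF assms(3,4)] disjI2)
  with 0 show ?case
    by simp
next
  case (Suc n)
  show ?case
  proof (cases "reach E v r")
    case False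
    then have "herder_wins (Suc (Suc N)) E v"
      by (intro wins_if_root_cut_off_or_acyclic[OF assms(3,4) Suc.prems] disjI1)
    then show ?thesis
      by (rule herder_wins_mono) simp
  next
    case True
    obtain e where e: "e \<in> F \<inter> E"
      using Suc.hyps(2) by (metis card.empty ex_in_conv nat.distinct(1))
    have "n = card (F \<inter> (E - {e}))"
    proof -
      have "F \<inter> (E - {e}) = (F \<inter> E) - {e}" by blast
      then show ?thesis
        using Suc.hyps(2) e assms(1) by (simp add: card_Diff_singleton)
    qed
    moreover have "herder_wins (card (F \<inter> (E - {e})) + Suc (Suc N)) (E - {e}) w"
      if "reach (E - {e}) v w" for w
    proof (rule Suc.hyps(1))
      show "E - {e} \<subseteq> E0"
        using Suc.prems(1) by blast
      have "reach E0 v w"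
        using that Suc.prems(1) by (blast intro: reach_mono)
      then show "reach E0 r w"
        using Suc.prems(2) by (rule reach_trans[rotated])
    qed fact
    ultimately have "herder_wins (Suc (n + Suc (Suc N))) E v"
      using e by (intro herder_wins_SucI[of e]) auto
    then show ?thesis
      by (simp only: Suc.hyps(2)[symmetric] add_Suc)
  qed
qed

lemma wins_at_height_Suc:
  assumes "\<forall>r. \<not> on_disjoint_cycles E r k" "wins_at_height E h N"
  shows "wins_at_height E (Suc h) ((k - 1) * Suc h + Suc (Suc N))"
  unfolding wins_at_height_def
proof (intro allI impI)
  fix E' w \<rho>
  assume E': "E' \<subseteq> E" and "reach E' w \<rho>" and height: "paths_from_le E' \<rho> (Suc h)"
  have "\<not> on_disjoint_cycles E' \<rho> k"
    using assms(1) on_disjoint_cycles_mono[OF _ E'] by blast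
  then obtain F where F: "finite F" "card F \<le> (k - 1) * Suc h"
    "\<And>E''. E'' \<subseteq> E' \<Longrightarrow> E'' \<inter> F = {} \<Longrightarrow> \<not> on_cycle E'' \<rho>"
    using height by (rule cycle_transversal) blast
  have "wins_at_height E' h N"
    using assms(2) E' by (rule wins_at_height_mono) simp
  have wins: "herder_wins (card (F \<inter> E') + Suc (Suc N)) E' w"
    using F(1,3) height \<open>wins_at_height E' h N\<close> order_refl reach_sym[OF \<open>reach E' w \<rho>\<close>]
    by (rule wins_deleting_transversal)
  have "card (F \<inter> E') \<le> (k - 1) * Suc h"
    using F(1,2) card_mono[of F "F \<inter> E'"] by simp
  then show "herder_wins ((k - 1) * Suc h + Suc (Suc N)) E' w"
    by (intro herder_wins_mono[OF wins]) simp
qed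

lemma wins_at_height_bound:
  assumes "\<forall>r. \<not> on_disjoint_cycles E r k" "h < k"
  shows "wins_at_height E h (h * ((k - 1) * (k - 1) + 2))"
  using assms(2)
proof (induction h)
  case 0
  show ?case by (rule wins_at_height_0)
next
  case (Suc h)
  then have "wins_at_height E (Suc h) ((k - 1) * Suc h + Suc (Suc (h * ((k - 1) * (k - 1) + 2))))"
    using assms(1) by (intro wins_at_height_Suc) simp_all
  moreover have "(k - 1) * Suc h \<le> (k - 1) * (k - 1)"
    using Suc.prems by (intro mult_le_mono2) simp
  ultimately show ?case
    by (elim wins_at_height_mono) simp_all
qed

lemma on_disjoint_cycles_imp_vertex:
  assumes "simple_graph V E" "on_disjoint_cycles E x k" "k \<ge> 1"
  shows "x \<in> V"
proof -
  obtain cy where cy: "is_cycle E cy" "x \<in> set cy"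
    using assms(2,3) unfolding on_disjoint_cycles_def by (meson less_le_trans zero_less_one)
  then obtain i where "i < length cy" "cy ! i = x"
    by (meson in_set_conv_nth)
  then have "{x, cy ! (Suc i mod length cy)} \<in> E"
    using cy(1) unfolding is_cycle_def by blast
  then obtain a b where "a \<in> V" "b \<in> V" "{x, cy ! (Suc i mod length cy)} = {a, b}"
    using assms(1) unfolding simple_graph_def by meson
  then show ?thesis
    by (auto simp: doubleton_eq_iff)
qed

lemma cubic_bound:
  assumes "1 \<le> k"
  shows "(k - 1) * ((k - 1) * (k - 1) + 2) \<le> nat (int k ^ 3 - 2 * int k ^ 2 + 3 * int k - 2)"
proof -
  obtain j where k: "k = Suc j" using assms by (cases k) auto
  have eq: "int k ^ 3 - 2 * int k ^ 2 + 3 * int k - 2 = int (j * (j * j + 2) + j * j)"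
    unfolding k by (simp add: algebra_simps power2_eq_square power3_eq_cube)
  have "nat (int k ^ 3 - 2 * int k ^ 2 + 3 * int k - 2) = j * (j * j + 2) + j * j"
    unfolding eq by (rule nat_int)
  moreover have "k - 1 = j" using k by simp
  ultimately show ?thesis by simp
qed

theorem mainTheorem18:
  fixes V :: "'a set" and E :: "'a set set" and k :: nat
  assumes "simple_graph V E"
    and "k \<ge> 1"
    and "\<not> has_path E k"
    and "\<forall>v\<in>V. \<not> on_disjoint_cycles E v k"
  shows "\<forall>v\<in>V. herder_wins (nat (int k ^ 3 - 2 * int k ^ 2 + 3 * int k - 2)) E v"
proof
  fix v assume "v \<in> V"
  have "\<forall>x. \<not> on_disjoint_cycles E x k"
    using assms(4) on_disjoint_cycles_imp_vertex[OF assms(1) _ assms(2)] by blast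
  then have "wins_at_height E (k - 1) ((k - 1) * ((k - 1) * (k - 1) + 2))"
    using assms(2) by (intro wins_at_height_bound) simp_all
  then have "herder_wins ((k - 1) * ((k - 1) * (k - 1) + 2)) E v"
    using reach_refl paths_from_le_if_not_has_path[OF assms(3)] by (rule wins_at_heightD)
  then show "herder_wins (nat (int k ^ 3 - 2 * int k ^ 2 + 3 * int k - 2)) E v"
    using cubic_bound[OF assms(2)] by (rule herder_wins_mono)
qed

end
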